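(* Let $g\colon\mathbb X\to\mathbb Y$ be twice continuously differentiable, $D\subset\mathbb Y$ closed, $\Phi(x):=g(x)-D$, $(\bar x,0)\in\operatorname{gph}\Phi$, $u\in\mathbb S_{\mathbb X}$. Then $\Phi$ is strongly asymptotically regular at $(\bar x,0)$ in direction $u$ if FOSCMS$(u)$ holds, or if $\mathbb Y=\mathbb R^m$, $D$ is polyhedral locally around $g(\bar x)$, and SOSCMS$(u)$ holds.
   Context: FOSCMS$(u)$: every $y^*\in\mathcal N_D(g(\bar x);\nabla g(\bar x)u)$ with $\nabla g(\bar x)^*y^*=0$ is zero. SOSCMS$(u)$: every $y^*\in\mathcal N_D(g(\bar x);\nabla g(\bar x)u)$ with $\nabla g(\bar x)^*y^*=0$ and $\langle u,\nabla^2\langle y^*,g\rangle(\bar x)u\rangle\ge0$ is zero. $\mathcal N_D(y;w)$ is the directional limiting normal cone (limits of $\eta_k\in\widehat{\mathcal N}_D(y+t_kw_k)$, $w_k\to w$, $t_k\searrow0$). $D$ polyhedral locally around $y$: $D\cap V$ is a finite union of convex polyhedra for some neighbourhood $V$ of $y$. Strong asymptotic regularity in direction $u$ at $(\bar x,\bar y)$: for all $\{(x_k,y_k)\}\subset\operatorname{gph}\Phi$, $\{x_k^*\}\subset\mathbb X$, $\{\lambda_k\}\subset\mathbb Y$, $x^*,y^*$ with $x_k\notin\Phi^{-1}(\bar y)$, $y_k\ne\bar y$, $x_k^*\in\widehat D^*\Phi(x_k,y_k)(\lambda_k)$ (regular coderivative), $x_k\to\bar x$, $y_k\to\bar y$,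 $x_k^*\to x^*$, $(x_k-\bar x)/\|x_k-\bar x\|\to u$, $(y_k-\bar y)/\|x_k-\bar x\|\to0$, $\|\lambda_k\|\to\infty$, $(y_k-\bar y)/\|y_k-\bar y\|-\lambda_k/\|\lambda_k\|\to0$, $(\|y_k-\bar y\|/\|x_k-\bar x\|)\lambda_k\to y^*$, one has $x^*\in\bigcup_{\lambda}D^*\Phi((\bar x,\bar y);(u,0))(\lambda)$, where $x^*\in D^*\Phi((\bar x,\bar y);(u,0))(\lambda)$ iff $(x^*,-\lambda)\in\mathcal N_{\operatorname{gph}\Phi}((\bar x,\bar y);(u,0))$. *)

theory Defs
  imports "HOL-Analysis.Analysis"
begin

definition reg_normal :: "'a::euclidean_space set \<Rightarrow> 'a \<Rightarrow> 'a set" where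
  "reg_normal C x = {v. x \<in> C \<and>
     (\<forall>\<epsilon>>0. \<exists>\<delta>>0. \<forall>z\<in>C. norm (z - x) < \<delta> \<longrightarrow> inner v (z - x) \<le> \<epsilon> * norm (z - x))}"

definition dir_normal :: "'a::euclidean_space set \<Rightarrow> 'a \<Rightarrow> 'a \<Rightarrow> 'a set" where
  "dir_normal C y w = {\<eta>. \<exists>(t::nat \<Rightarrow> real) wk \<eta>k.
      (\<forall>k. t k > 0) \<and> t \<longlonglongrightarrow> 0 \<and> wk \<longlonglongrightarrow> w \<and> \<eta>k \<longlonglongrightarrow> \<eta> \<and>
      (\<forall>k. \<eta>k k \<in> reg_normal C (y + t k *\<^sub>R wk k))}"

definition gph :: "('a \<Rightarrow> 'b set) \<Rightarrow> ('a \<times> 'b) set" where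
  "gph \<Phi> = {(x, y). y \<in> \<Phi> x}"

definition reg_coderiv :: "('a::euclidean_space \<Rightarrow> 'b::euclidean_space set) \<Rightarrow> 'a \<Rightarrow> 'b \<Rightarrow> 'b \<Rightarrow> 'a set" where
  "reg_coderiv \<Phi> x y lm = {xs. (xs, - lm) \<in> reg_normal (gph \<Phi>) (x, y)}"

definition dir_coderiv :: "('a::euclidean_space \<Rightarrow> 'b::euclidean_space set) \<Rightarrow> 'a \<Rightarrow> 'b \<Rightarrow> 'a \<Rightarrow> 'b \<Rightarrow> 'b \<Rightarrow> 'a set" where
  "dir_coderiv \<Phi> x y u v lm = {xs. (xs, - lm) \<in> dir_normal (gph \<Phi>) (x, y) (u, v)}"

definition strongly_asymp_regular ::
  "('a::euclidean_space \<Rightarrow> 'b::euclidean_space set) \<Rightarrow> 'a \<Rightarrow> 'b \<Rightarrow> 'a \<Rightarrow> bool" where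
  "strongly_asymp_regular \<Phi> xb yb u \<longleftrightarrow>
    (\<forall>(x::nat \<Rightarrow> 'a) (y::nat \<Rightarrow> 'b) (xs::nat \<Rightarrow> 'a) (lam::nat \<Rightarrow> 'b) xst yst.
       (\<forall>k. (x k, y k) \<in> gph \<Phi>) \<and>
       (\<forall>k. x k \<notin> {z. yb \<in> \<Phi> z}) \<and> (\<forall>k. y k \<noteq> yb) \<and>
       (\<forall>k. xs k \<in> reg_coderiv \<Phi> (x k) (y k) (lam k)) \<and>
       x \<longlonglongrightarrow> xb \<and> y \<longlonglongrightarrow> yb \<and> xs \<longlonglongrightarrow> xst \<and>
       (\<lambda>k. (1 / norm (x k - xb)) *\<^sub>R (x k - xb)) \<longlonglongrightarrow> u \<and>
       (\<lambda>k. (1 / norm (x k - xb)) *\<^sub>R (y k - yb)) \<longlonglongrightarrow> 0 \<and>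
       filterlim (\<lambda>k. norm (lam k)) at_top sequentially \<and>
       (\<lambda>k. (1 / norm (y k - yb)) *\<^sub>R (y k - yb) - (1 / norm (lam k)) *\<^sub>R lam k) \<longlonglongrightarrow> 0 \<and>
       (\<lambda>k. (norm (y k - yb) / norm (x k - xb)) *\<^sub>R lam k) \<longlonglongrightarrow> yst
     \<longrightarrow> (\<exists>lm. xst \<in> dir_coderiv \<Phi> xb yb u 0 lm))"

definition locally_polyhedral :: "'a::euclidean_space set \<Rightarrow> 'a \<Rightarrow> bool" where
  "locally_polyhedral D y \<longleftrightarrow> (\<exists>V P. open V \<and> y \<in> V \<and> finite P \<and>
      (\<forall>p\<in>P. polyhedron p) \<and> D \<inter> V = \<Union>P)"

end

theory Submission
  imports Defs
begin

text \<open>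
  Suppose sequences as in the definition of strong asymptotic regularity existed, and put
  d_k = g x_k - y_k \<in> D. The normalised multipliers lam_k / |lam_k| are regular normals to D at
  d_k, and d_k approaches g xb in direction g' xb u at rate |x_k - xb|, so a cluster point \<nu> of
  them is a unit directional limiting normal. Since x*_k = (g' x_k)* lam_k stays bounded while
  |lam_k| \<rightarrow> \<infinity>, also (g' xb)* \<nu> = 0, contradicting FOSCMS(u).

  If D is locally polyhedral, infinitely many d_k lie in one polyhedral piece with the same active
  constraints; then g xb - d_k is a feasible direction at each such d_j, whence
  \<langle>\<nu>, g xb - d_k\<rangle> \<le> 0. As y_k / |y_k| is asymptotically aligned with \<nu>, this gives
  \<langle>\<nu>, g x_k - g xb\<rangle> \<ge> \<langle>\<nu>, y_k\<rangle> > 0, and a second-order mean value expansion, whose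
  first-order term vanishes, yields \<langle>\<nu>, g'' xb u u\<rangle> \<ge> 0, contradicting SOSCMS(u).
\<close>

section \<open>Regular and directional normals\<close>

lemma reg_normal_scaleR:
  assumes "v \<in> reg_normal C x" "c > 0"
  shows "c *\<^sub>R v \<in> reg_normal C x"
  unfolding reg_normal_def
proof (intro CollectI conjI allI impI)
  show "x \<in> C" using assms(1) by (simp add: reg_normal_def)
  fix e :: real assume "e > 0"
  then have "e / c > 0" using assms(2) by simp
  then obtain d where "d > 0" "\<forall>z\<in>C. norm (z - x) < d \<longrightarrow> inner v (z - x) \<le> (e/c) * norm (z - x)"
    using assms(1) unfolding reg_normal_def by blast
  with assms(2) show "\<exists>d>0. \<forall>z\<in>C. norm (z - x) < d \<longrightarrow> inner (c *\<^sub>R v) (z - x) \<le> e * norm (z - x)"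
    by (auto simp: pos_le_divide_eq mult.commute)
qed

lemma reg_normal_sgn:
  assumes "v \<in> reg_normal C x"
  shows "sgn v \<in> reg_normal C x"
  using reg_normal_scaleR[OF assms, of "inverse (norm v)"] assms
  by (cases "v = 0") (simp_all add: sgn_div_norm divide_inverse_commute)

lemma reg_normal_inner_tangent_le:
  fixes \<gamma> :: "real \<Rightarrow> 'a::euclidean_space"
  assumes v: "v \<in> reg_normal C x"
    and der: "(\<gamma> has_vector_derivative w) (at_right 0)" and "\<gamma> 0 = x"
    and inC: "\<forall>\<^sub>F s in at_right 0. \<gamma> s \<in> C"
  shows "inner v w \<le> 0"
proof -
  define q where "q s = (1 / s) *\<^sub>R (\<gamma> s - x)" for s
  have "((\<lambda>s. (1 / norm (s - 0)) *\<^sub>R (\<gamma> s - (\<gamma> 0 + s *\<^sub>R w))) \<longlongrightarrow> 0) (at_right 0)"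
    using der unfolding has_vector_derivative_def has_derivative_within by simp
  moreover have "\<forall>\<^sub>F s in at_right 0. (1 / norm (s - 0)) *\<^sub>R (\<gamma> s - (\<gamma> 0 + s *\<^sub>R w)) = q s - w"
    using eventually_at_right_less[of 0]
    by eventually_elim (simp add: q_def \<open>\<gamma> 0 = x\<close> algebra_simps)
  ultimately have "((\<lambda>s. q s - w) \<longlongrightarrow> 0) (at_right 0)"
    by (rule Lim_transform_eventually)
  then have q: "(q \<longlongrightarrow> w) (at_right 0)"
    by (simp add: LIM_zero_iff)
  have "(\<gamma> \<longlongrightarrow> x) (at_right 0)"
    using has_vector_derivative_continuous[OF der] \<open>\<gamma> 0 = x\<close> by (simp add: continuous_within)
  have le: "inner v w \<le> e * norm w" if "e > 0" for e
  proof -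
    obtain d where "d > 0" and d: "\<forall>z\<in>C. norm (z - x) < d \<longrightarrow> inner v (z - x) \<le> e * norm (z - x)"
      using v \<open>e > 0\<close> unfolding reg_normal_def by blast
    have "\<forall>\<^sub>F s in at_right 0. norm (\<gamma> s - x) < d"
      using tendstoD[OF \<open>(\<gamma> \<longlongrightarrow> x) (at_right 0)\<close> \<open>d > 0\<close>] by (simp add: dist_norm)
    then have ev: "\<forall>\<^sub>F s in at_right 0. inner v (q s) \<le> e * norm (q s)"
      using inC eventually_at_right_less[of 0]
    proof eventually_elim
      case (elim s)
      then have "inner v (\<gamma> s - x) \<le> e * norm (\<gamma> s - x)" using d by blast
      with \<open>s > 0\<close> show ?case
        by (simp add: q_def divide_right_mono)
    qed
    show ?thesis
      by (rule tendsto_le[OF trivial_limit_at_right_real _ _ ev]) (intro tendsto_intros q)+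
  qed
  have "\<forall>\<^sub>F e in at_right 0. inner v w \<le> e * norm w"
    using eventually_at_right_less[of 0] by eventually_elim (rule le)
  then show ?thesis
    by (intro tendsto_le[OF trivial_limit_at_right_real, of "\<lambda>e. e * norm w" 0]) (auto intro!: tendsto_eq_intros)
qed

lemma dir_normalI_seq:
  assumes "\<And>k. t k > 0" "t \<longlonglongrightarrow> 0" "(\<lambda>k. (1 / t k) *\<^sub>R (d k - y)) \<longlonglongrightarrow> w"
    and "\<And>k. \<eta> k \<in> reg_normal C (d k)" "\<eta> \<longlonglongrightarrow> \<nu>"
  shows "\<nu> \<in> dir_normal C y w"
  unfolding dir_normal_def
proof (intro CollectI exI conjI allI)
  show "\<eta> k \<in> reg_normal C (y + t k *\<^sub>R ((1 / t k) *\<^sub>R (d k - y)))" for k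
    using assms(1,4)[of k] by simp
qed (use assms in auto)

lemma reg_normal_gph_imp_reg_normal:
  assumes "(xs, - lm) \<in> reg_normal (gph (\<lambda>x. {g x - d | d. d \<in> D})) (x, y)"
  shows "lm \<in> reg_normal D (g x - y)"
proof -
  let ?G = "gph (\<lambda>x. {g x - d | d. d \<in> D})"
  have "(x, y) \<in> ?G" using assms by (simp add: reg_normal_def)
  then have "g x - y \<in> D" by (auto simp: gph_def)
  show ?thesis unfolding reg_normal_def
  proof (intro CollectI conjI allI impI \<open>g x - y \<in> D\<close>)
    fix e :: real assume "e > 0"
    then obtain \<delta> where "\<delta> > 0"
      and \<delta>: "\<forall>z\<in>?G. norm (z - (x, y)) < \<delta> \<longrightarrow> inner (xs, - lm) (z - (x, y)) \<le> e * norm (z - (x, y))"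
      using assms unfolding reg_normal_def by blast
    show "\<exists>\<delta>>0. \<forall>z\<in>D. norm (z - (g x - y)) < \<delta> \<longrightarrow> inner lm (z - (g x - y)) \<le> e * norm (z - (g x - y))"
    proof (intro exI[of _ \<delta>] conjI ballI impI \<open>\<delta> > 0\<close>)
      fix z assume "z \<in> D" and z: "norm (z - (g x - y)) < \<delta>"
      have diff: "(x, g x - z) - (x, y) = (0, - (z - (g x - y)))" by simp
      have "(x, g x - z) \<in> ?G" using \<open>z \<in> D\<close> by (auto simp: gph_def)
      moreover have "norm ((x, g x - z) - (x, y)) < \<delta>" unfolding diff using z by (simp add: norm_minus_commute)
      ultimately have "inner (xs, - lm) ((x, g x - z) - (x, y)) \<le> e * norm ((x, g x - z) - (x, y))"
        using \<delta> by blast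
      then show "inner lm (z - (g x - y)) \<le> e * norm (z - (g x - y))"
        unfolding diff by (simp add: norm_minus_commute flip: inner_minus_right)
    qed
  qed
qed

lemma reg_normal_gph_inner_le:
  assumes der: "(g has_derivative G) (at x)"
    and nrm: "(xs, - lm) \<in> reg_normal (gph (\<lambda>x. {g x - d | d. d \<in> D})) (x, y)"
  shows "inner xs h \<le> inner lm (G h)"
proof -
  have "(x, y) \<in> gph (\<lambda>x. {g x - d | d. d \<in> D})" using nrm by (simp add: reg_normal_def)
  then obtain d0 where "d0 \<in> D" "y = g x - d0" by (auto simp: gph_def)
  have "linear G" using has_derivative_linear[OF der] .
  have "((\<lambda>s. x + s *\<^sub>R h) has_derivative (\<lambda>r. r *\<^sub>R h)) (at_right 0)"
    by (auto intro!: derivative_eq_intros)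
  from has_derivative_compose[OF this, of g G] der
  have "((\<lambda>s. g (x + s *\<^sub>R h)) has_vector_derivative G h) (at_right 0)"
    unfolding has_vector_derivative_def using linear_scale[OF \<open>linear G\<close>] by simp
  then have "((\<lambda>s. (x + s *\<^sub>R h, g (x + s *\<^sub>R h) - d0)) has_vector_derivative (h, G h)) (at_right 0)"
    by (auto intro!: derivative_eq_intros)
  from reg_normal_inner_tangent_le[OF nrm this] \<open>y = g x - d0\<close> \<open>d0 \<in> D\<close>
  show ?thesis by (auto simp: gph_def)
qed

lemma reg_normal_gph_eq_adjoint:
  assumes der: "(g has_derivative G) (at x)"
    and nrm: "(xs, - lm) \<in> reg_normal (gph (\<lambda>x. {g x - d | d. d \<in> D})) (x, y)"
  shows "xs = adjoint G lm"
proof -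
  have "linear G" using has_derivative_linear[OF der] .
  have "inner xs h = inner (adjoint G lm) h" for h
    using reg_normal_gph_inner_le[OF der nrm, of h] reg_normal_gph_inner_le[OF der nrm, of "- h"]
      adjoint_works[OF \<open>linear G\<close>, of h lm] linear_neg[OF \<open>linear G\<close>]
    by (simp add: inner_commute)
  then show ?thesis
    by (metis inner_diff_left inner_eq_zero_iff right_minus_eq)
qed

lemma adjoint_blinfun_eq_0_iff:
  fixes A :: "'a::euclidean_space \<Rightarrow>\<^sub>L 'b::euclidean_space"
  shows "adjoint (blinfun_apply A) \<nu> = 0 \<longleftrightarrow> (\<forall>h. inner \<nu> (A h) = 0)"
proof -
  have adj: "inner (adjoint (blinfun_apply A) \<nu>) h = inner \<nu> (A h)" for h
    using adjoint_works[OF bounded_linear.linear[OF blinfun.bounded_linear_right], of h A \<nu>]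
    by (metis inner_commute)
  show ?thesis
    by (metis adj inner_eq_zero_iff inner_zero_left)
qed

lemma adjoint_eq_0_of_normalized_limit:
  fixes A :: "nat \<Rightarrow> 'a::euclidean_space \<Rightarrow>\<^sub>L 'b::euclidean_space"
  assumes "A \<longlonglongrightarrow> A0"
    and "(\<lambda>k. adjoint (blinfun_apply (A k)) (lam k)) \<longlonglongrightarrow> xst"
    and "filterlim (\<lambda>k. norm (lam k)) at_top sequentially"
    and "(\<lambda>k. sgn (lam k)) \<longlonglongrightarrow> \<nu>"
  shows "adjoint (blinfun_apply A0) \<nu> = 0"
  unfolding adjoint_blinfun_eq_0_iff
proof
  fix h
  have "(\<lambda>k. inner (sgn (lam k)) (A k h)) \<longlonglongrightarrow> inner \<nu> (A0 h)"
    using assms(1,4) by (intro tendsto_inner blinfun.tendsto tendsto_const)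
  moreover have "inner (sgn (lam k)) (A k h)
      = inverse (norm (lam k)) * inner (adjoint (blinfun_apply (A k)) (lam k)) h" for k
    using adjoint_works[OF bounded_linear.linear[OF blinfun.bounded_linear_right], of h "A k" "lam k"]
    by (simp add: sgn_div_norm divide_inverse_commute inner_commute)
  moreover have "(\<lambda>k. inverse (norm (lam k)) * inner (adjoint (blinfun_apply (A k)) (lam k)) h) \<longlonglongrightarrow> 0 * inner xst h"
    using assms(2,3) by (intro tendsto_mult tendsto_inverse_0_at_top tendsto_inner tendsto_const)
  ultimately show "inner \<nu> (A0 h) = 0"
    using LIMSEQ_unique by fastforce
qed

section \<open>First- and second-order expansions\<close>

lemma has_derivative_directional_seq:
  assumes der: "(g has_derivative G) (at a)" and "x \<longlonglongrightarrow> a" "\<And>k. x k \<noteq> a"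
    and dir: "(\<lambda>k. (1 / norm (x k - a)) *\<^sub>R (x k - a)) \<longlonglongrightarrow> u"
  shows "(\<lambda>k. (1 / norm (x k - a)) *\<^sub>R (g (x k) - g a)) \<longlonglongrightarrow> G u"
proof -
  have "bounded_linear G" using der by (rule has_derivative_bounded_linear)
  have "filterlim x (at a) sequentially"
    using assms(2,3) by (simp add: filterlim_at)
  then have "(\<lambda>k. (1 / norm (x k - a)) *\<^sub>R (g (x k) - (g a + G (x k - a)))) \<longlonglongrightarrow> 0"
    using der unfolding has_derivative_within by (auto intro: filterlim_compose)
  moreover have "(\<lambda>k. G ((1 / norm (x k - a)) *\<^sub>R (x k - a))) \<longlonglongrightarrow> G u"
    using bounded_linear.tendsto[OF \<open>bounded_linear G\<close> dir] .
  ultimately have "(\<lambda>k. (1 / norm (x k - a)) *\<^sub>R (g (x k) - (g a + G (x k - a)))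
      + G ((1 / norm (x k - a)) *\<^sub>R (x k - a))) \<longlonglongrightarrow> 0 + G u"
    by (rule tendsto_add)
  moreover have "(1 / norm (x k - a)) *\<^sub>R (g (x k) - (g a + G (x k - a)))
      + G ((1 / norm (x k - a)) *\<^sub>R (x k - a)) = (1 / norm (x k - a)) *\<^sub>R (g (x k) - g a)" for k
    by (subst linear_scale[OF bounded_linear.linear[OF \<open>bounded_linear G\<close>]]) (simp add: algebra_simps)
  ultimately show ?thesis
    by simp
qed

lemma inner_second_order_mvt:
  fixes g :: "'a::euclidean_space \<Rightarrow> 'b::euclidean_space"
  assumes g1: "\<And>x. (g has_derivative blinfun_apply (g' x)) (at x)"
    and g2: "\<And>x. (g' has_derivative blinfun_apply (g'' x)) (at x)"
  obtains z \<xi> where "norm (z - a) \<le> norm h" "0 < \<xi>"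
    "inner v (g (a + h) - g a) = inner v (g' a h) + \<xi> * inner v (g'' z h h)"
proof -
  define \<phi> where "\<phi> s = inner v (g (a + s *\<^sub>R h))" for s :: real
  define \<psi> where "\<psi> s = inner v (g' (a + s *\<^sub>R h) h)" for s :: real
  have line: "((\<lambda>s. a + s *\<^sub>R h) has_derivative (\<lambda>r. r *\<^sub>R h)) (at s within S)" for s S
    by (auto intro!: derivative_eq_intros)
  have "(\<phi> has_derivative (\<lambda>r. r * \<psi> s)) (at s within {0..1})" for s
    using has_derivative_inner_right[OF has_derivative_compose[OF line g1], of v]
    by (simp add: \<phi>_def[abs_def] \<psi>_def blinfun.scaleR_right)
  then obtain \<xi> where \<xi>: "0 < \<xi>" "\<xi> < 1" "\<phi> 1 - \<phi> 0 = \<psi> \<xi>"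
    using mvt_simple[of 0 1 \<phi> "\<lambda>s r. r * \<psi> s"] by auto
  have "bounded_linear (\<lambda>B. inner v (blinfun_apply B h))"
    by (rule bounded_linear_compose[OF bounded_linear_inner_right blinfun.bounded_linear_left])
  from bounded_linear.has_derivative[OF this has_derivative_compose[OF line g2]]
  have "(\<psi> has_derivative (\<lambda>r. r * inner v (g'' (a + s *\<^sub>R h) h h))) (at s within {0..\<xi>})" for s
    by (simp add: \<psi>_def[abs_def] blinfun.scaleR_right blinfun.scaleR_left)
  then obtain \<eta> where \<eta>: "0 < \<eta>" "\<eta> < \<xi>" "\<psi> \<xi> - \<psi> 0 = \<xi> * inner v (g'' (a + \<eta> *\<^sub>R h) h h)"
    using mvt_simple[of 0 \<xi> \<psi> "\<lambda>s r. r * inner v (g'' (a + s *\<^sub>R h) h h)"] \<xi> by auto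
  show ?thesis
  proof
    show "norm (a + \<eta> *\<^sub>R h - a) \<le> norm h"
      using \<eta> \<xi> by (simp add: mult_left_le_one_le)
    have "inner v (g (a + h) - g a) = \<psi> \<xi>"
      using \<xi> by (simp add: \<phi>_def inner_diff_right)
    with \<eta> show "inner v (g (a + h) - g a) = inner v (g' a h) + \<xi> * inner v (g'' (a + \<eta> *\<^sub>R h) h h)"
      by (simp add: \<psi>_def)
  qed (rule \<xi>(1))
qed

lemma second_derivative_inner_nonneg:
  fixes g :: "'a::euclidean_space \<Rightarrow> 'b::euclidean_space"
  assumes g1: "\<And>x. (g has_derivative blinfun_apply (g' x)) (at x)"
    and g2: "\<And>x. (g' has_derivative blinfun_apply (g'' x)) (at x)"
    and "isCont g'' a" and "adjoint (blinfun_apply (g' a)) \<nu> = 0"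
    and "x \<longlonglongrightarrow> a" "\<And>k. x k \<noteq> a" and dir: "(\<lambda>k. (1 / norm (x k - a)) *\<^sub>R (x k - a)) \<longlonglongrightarrow> u"
    and nonneg: "\<forall>\<^sub>F k in sequentially. inner \<nu> (g (x k) - g a) \<ge> 0"
  shows "inner \<nu> (g'' a u u) \<ge> 0"
proof -
  define t where "t k = norm (x k - a)" for k
  define w where "w k = (1 / t k) *\<^sub>R (x k - a)" for k
  have "t k > 0" for k using \<open>x k \<noteq> a\<close> by (simp add: t_def)
  have "x k - a = t k *\<^sub>R w k" for k using \<open>t k > 0\<close> by (simp add: w_def)
  have "\<exists>z \<xi>. norm (z - a) \<le> t k \<and> 0 < \<xi> \<and>
      inner \<nu> (g (x k) - g a) = \<xi> * (t k)\<^sup>2 * inner \<nu> (g'' z (w k) (w k))" for k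
  proof -
    obtain z \<xi> where "norm (z - a) \<le> t k" "0 < \<xi>"
      "inner \<nu> (g (x k) - g a) = inner \<nu> (g' a (x k - a)) + \<xi> * inner \<nu> (g'' z (x k - a) (x k - a))"
      using inner_second_order_mvt[OF g1 g2, of a "x k - a" \<nu>] by (auto simp: t_def)
    moreover have "inner \<nu> (g' a (x k - a)) = 0"
      using \<open>adjoint (blinfun_apply (g' a)) \<nu> = 0\<close> unfolding adjoint_blinfun_eq_0_iff by blast
    moreover have "g'' z (x k - a) (x k - a) = (t k)\<^sup>2 *\<^sub>R g'' z (w k) (w k)"
      unfolding \<open>x k - a = t k *\<^sub>R w k\<close>
      by (simp add: blinfun.scaleR_right blinfun.scaleR_left power2_eq_square)
    ultimately show ?thesis
      by (intro exI[of _ z] exI[of _ \<xi>]) simp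
  qed
  then obtain z \<xi> where z: "\<And>k. norm (z k - a) \<le> t k" and "\<And>k. 0 < \<xi> k"
    and taylor: "\<And>k. inner \<nu> (g (x k) - g a) = \<xi> k * (t k)\<^sup>2 * inner \<nu> (g'' (z k) (w k) (w k))"
    by metis
  have "t \<longlonglongrightarrow> 0"
    using tendsto_norm[OF LIM_zero[OF \<open>x \<longlonglongrightarrow> a\<close>]] by (simp add: t_def[abs_def])
  have "(\<lambda>k. norm (z k - a)) \<longlonglongrightarrow> 0"
    by (rule tendsto_sandwich[OF _ _ tendsto_const \<open>t \<longlonglongrightarrow> 0\<close>]) (use z in auto)
  then have "z \<longlonglongrightarrow> a"
    by (simp add: tendsto_norm_zero_iff LIM_zero_iff)
  then have "(\<lambda>k. g'' (z k)) \<longlonglongrightarrow> g'' a"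
    by (rule isCont_tendsto_compose[OF \<open>isCont g'' a\<close>])
  moreover have "w \<longlonglongrightarrow> u"
    using dir by (simp add: w_def[abs_def] t_def)
  ultimately have "(\<lambda>k. inner \<nu> (g'' (z k) (w k) (w k))) \<longlonglongrightarrow> inner \<nu> (g'' a u u)"
    by (intro tendsto_inner[OF tendsto_const] blinfun.tendsto)
  moreover have "\<forall>\<^sub>F k in sequentially. inner \<nu> (g'' (z k) (w k) (w k)) \<ge> 0"
    using nonneg
  proof eventually_elim
    case (elim k)
    have "\<xi> k * (t k)\<^sup>2 > 0" using \<open>0 < \<xi> k\<close> \<open>t k > 0\<close> by simp
    with elim taylor[of k] show ?case
      by (auto simp: zero_le_mult_iff)
  qed
  ultimately show ?thesis
    by (rule tendsto_lowerbound) simp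
qed

section \<open>Feasible directions in polyhedral sets\<close>

lemma halfspace_boundary:
  assumes "x \<in> {z. inner a z \<le> b}" "x \<notin> interior {z. inner a z \<le> b}"
  shows "inner a x = b"
proof (rule ccontr)
  assume "inner a x \<noteq> b"
  with assms(1) have "x \<in> {z. inner a z < b}" by simp
  moreover have "{z. inner a z < b} \<subseteq> interior {z. inner a z \<le> b}"
    by (intro interior_maximal open_halfspace_lt) auto
  ultimately show False using assms(2) by blast
qed

lemma Inter_halfspaces_feasible_direction:
  fixes p q y :: "'a::euclidean_space"
  assumes "finite F" and halfspaces: "\<forall>h\<in>F. \<exists>a b. h = {x. inner a x \<le> b}"
    and "p \<in> \<Inter>F" "q \<in> \<Inter>F" "y \<in> \<Inter>F"
    and active: "\<And>h. h \<in> F \<Longrightarrow> p \<notin> interior h \<Longrightarrow> q \<notin> interior h"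
  shows "\<forall>\<^sub>F s in at_right 0. p + s *\<^sub>R (y - q) \<in> \<Inter>F"
proof -
  have "\<forall>\<^sub>F s in at_right 0. p + s *\<^sub>R (y - q) \<in> h" if "h \<in> F" for h
  proof (cases "p \<in> interior h")
    case True
    have "((\<lambda>s. p + s *\<^sub>R (y - q)) \<longlongrightarrow> p + 0 *\<^sub>R (y - q)) (at_right 0)"
      by (intro tendsto_intros)
    from topological_tendstoD[OF this[simplified] open_interior True]
    show ?thesis
      by (rule eventually_mono) (use interior_subset in blast)
  next
    case False
    obtain a b where h: "h = {x. inner a x \<le> b}" using halfspaces \<open>h \<in> F\<close> by blast
    have "inner a p = b" "inner a q = b" "inner a y \<le> b"
      using halfspace_boundary False active[OF \<open>h \<in> F\<close> False] assms(3-5) \<open>h \<in> F\<close>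
      unfolding h by blast+
    then have "p + s *\<^sub>R (y - q) \<in> h" if "s > 0" for s
      using that by (simp add: h inner_add_right inner_diff_right mult_nonneg_nonpos)
    then show ?thesis
      using eventually_at_right_less by (rule eventually_mono[rotated])
  qed
  then have "\<forall>\<^sub>F s in at_right 0. \<forall>h\<in>F. p + s *\<^sub>R (y - q) \<in> h"
    using \<open>finite F\<close> by (intro eventually_ball_finite) auto
  then show ?thesis by simp
qed

lemma locally_polyhedral_feasible_directions:
  assumes "locally_polyhedral D y" "\<And>k. d k \<in> D" "d \<longlonglongrightarrow> y"
  obtains S where "infinite S"
    "\<And>j k. j \<in> S \<Longrightarrow> k \<in> S \<Longrightarrow> \<forall>\<^sub>F s in at_right 0. d j + s *\<^sub>R (y - d k) \<in> D"
proof -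
  obtain V P where "open V" "y \<in> V" "finite P" and poly: "\<forall>p\<in>P. polyhedron p" and "D \<inter> V = \<Union>P"
    using assms(1) unfolding locally_polyhedral_def by blast
  obtain F where F: "\<And>p. p \<in> P \<Longrightarrow> finite (F p) \<and> p = \<Inter>(F p) \<and>
      (\<forall>h\<in>F p. \<exists>a b. a \<noteq> 0 \<and> h = {x. inner a x \<le> b})"
    using poly unfolding polyhedron_def by metis
  obtain N where "\<And>k. k \<ge> N \<Longrightarrow> d k \<in> V"
    using topological_tendstoD[OF assms(3) \<open>open V\<close> \<open>y \<in> V\<close>] eventually_sequentially by metis
  with assms(2) \<open>D \<inter> V = \<Union>P\<close> have "\<exists>p. k \<ge> N \<longrightarrow> p \<in> P \<and> d k \<in> p" for k
    by blast
  then obtain piece where piece: "\<And>k. k \<ge> N \<Longrightarrow> piece k \<in> P \<and> d k \<in> piece k"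
    by metis
  define HH where "HH = \<Union>(F ` P)"
  \<comment> \<open>pigeonhole: infinitely many d k share a piece and its set of active constraints\<close>
  define face where "face k = (piece k, {h \<in> HH. d k \<notin> interior h})" for k
  have "face ` {N..} \<subseteq> P \<times> Pow HH" using piece by (auto simp: face_def)
  moreover have "finite (P \<times> Pow HH)" using F \<open>finite P\<close> by (simp add: HH_def)
  ultimately have "finite (face ` {N..})" by (rule finite_subset)
  then obtain k0 where "k0 \<ge> N" and inf: "infinite {k \<in> {N..}. face k = face k0}"
    using pigeonhole_infinite[OF infinite_Ici] by blast
  define S where "S = {k \<in> {N..}. face k = face k0}"
  define p0 where "p0 = piece k0"
  have "p0 \<in> P" using piece \<open>k0 \<ge> N\<close> by (simp add: p0_def)
  have in_p0: "d k \<in> p0" if "k \<in> S" for k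
    using that piece[of k] by (auto simp: S_def face_def p0_def)
  have "y \<in> p0"
  proof -
    obtain r :: "nat \<Rightarrow> nat" where "strict_mono r" "\<And>n. r n \<in> S"
      using infinite_enumerate[OF inf] by (auto simp: S_def)
    have "closed p0" using poly \<open>p0 \<in> P\<close> polyhedron_imp_closed by blast
    moreover have "\<And>n. (d \<circ> r) n \<in> p0" using in_p0 \<open>\<And>n. r n \<in> S\<close> by simp
    moreover have "(d \<circ> r) \<longlonglongrightarrow> y" using LIMSEQ_subseq_LIMSEQ[OF assms(3) \<open>strict_mono r\<close>] .
    ultimately show ?thesis by (rule closed_sequentially)
  qed
  show ?thesis
  proof (rule that[of S])
    show "infinite S" using inf by (simp add: S_def)
    fix j k assume "j \<in> S" "k \<in> S"
    then have "{h \<in> HH. d j \<notin> interior h} = {h \<in> HH. d k \<notin> interior h}"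
      by (auto simp: S_def face_def)
    moreover have "F p0 \<subseteq> HH" using \<open>p0 \<in> P\<close> by (auto simp: HH_def)
    ultimately have "\<And>h. h \<in> F p0 \<Longrightarrow> d j \<notin> interior h \<Longrightarrow> d k \<notin> interior h"
      by blast
    moreover have "finite (F p0)" "\<forall>h\<in>F p0. \<exists>a b. h = {x. inner a x \<le> b}" and p0: "p0 = \<Inter>(F p0)"
      using F[OF \<open>p0 \<in> P\<close>] by blast+
    moreover have "d j \<in> \<Inter>(F p0)" "d k \<in> \<Inter>(F p0)" "y \<in> \<Inter>(F p0)"
      using in_p0 \<open>j \<in> S\<close> \<open>k \<in> S\<close> \<open>y \<in> p0\<close> p0 by blast+
    ultimately have "\<forall>\<^sub>F s in at_right 0. d j + s *\<^sub>R (y - d k) \<in> \<Inter>(F p0)"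
      by (intro Inter_halfspaces_feasible_direction)
    moreover have "\<Inter>(F p0) \<subseteq> D" using \<open>p0 \<in> P\<close> \<open>D \<inter> V = \<Union>P\<close> p0 by blast
    ultimately show "\<forall>\<^sub>F s in at_right 0. d j + s *\<^sub>R (y - d k) \<in> D"
      by (simp add: eventually_mono subset_iff)
  qed
qed

section \<open>Sequences in the definition of strong asymptotic regularity\<close>

text \<open>
  The data of the definition for x \<mapsto> g x - D at (xb, 0), with d k = g (x k) - y k, the coderivative
  condition already reduced to regular normality of lam k to D at d k, and the alignment of y k with
  lam k written with sgn.
\<close>

locale graph_normal_sequence =
  fixes g :: "'a::euclidean_space \<Rightarrow> 'b::euclidean_space"
    and g' :: "'a \<Rightarrow> 'a \<Rightarrow>\<^sub>L 'b"
    and g'' :: "'a \<Rightarrow> 'a \<Rightarrow>\<^sub>L ('a \<Rightarrow>\<^sub>L 'b)"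
    and D :: "'b set" and xb u :: 'a
    and x :: "nat \<Rightarrow> 'a" and d lam :: "nat \<Rightarrow> 'b" and xst :: 'a
  assumes g1: "\<And>x. (g has_derivative blinfun_apply (g' x)) (at x)"
    and g2: "\<And>x. (g' has_derivative blinfun_apply (g'' x)) (at x)"
    and g''_cont: "isCont g'' xb"
    and d_in: "\<And>k. d k \<in> D"
    and lam_normal: "\<And>k. lam k \<in> reg_normal D (d k)"
    and coderiv_lim: "(\<lambda>k. adjoint (blinfun_apply (g' (x k))) (lam k)) \<longlonglongrightarrow> xst"
    and x_lim: "x \<longlonglongrightarrow> xb" and x_ne: "\<And>k. x k \<noteq> xb"
    and x_dir: "(\<lambda>k. (1 / norm (x k - xb)) *\<^sub>R (x k - xb)) \<longlonglongrightarrow> u"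
    and residual_rate: "(\<lambda>k. (1 / norm (x k - xb)) *\<^sub>R (g (x k) - d k)) \<longlonglongrightarrow> 0"
    and lam_unbounded: "filterlim (\<lambda>k. norm (lam k)) at_top sequentially"
    and aligned: "(\<lambda>k. sgn (g (x k) - d k) - sgn (lam k)) \<longlonglongrightarrow> 0"
begin

lemma d_dir: "(\<lambda>k. (1 / norm (x k - xb)) *\<^sub>R (d k - g xb)) \<longlonglongrightarrow> g' xb u"
proof -
  have "(\<lambda>k. (1 / norm (x k - xb)) *\<^sub>R (g (x k) - g xb) - (1 / norm (x k - xb)) *\<^sub>R (g (x k) - d k))
      \<longlonglongrightarrow> g' xb u - 0"
    by (intro tendsto_diff has_derivative_directional_seq[OF g1 x_lim x_ne x_dir] residual_rate)
  then show ?thesis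
    by (simp add: algebra_simps)
qed

lemma dist_lim: "(\<lambda>k. norm (x k - xb)) \<longlonglongrightarrow> 0"
  using tendsto_norm[OF LIM_zero[OF x_lim]] by simp

lemma d_lim: "d \<longlonglongrightarrow> g xb"
proof -
  have "(\<lambda>k. norm (x k - xb) *\<^sub>R ((1 / norm (x k - xb)) *\<^sub>R (d k - g xb))) \<longlonglongrightarrow> 0 *\<^sub>R g' xb u"
    by (intro tendsto_scaleR dist_lim d_dir)
  then show ?thesis
    using x_ne by (simp add: LIM_zero_iff)
qed

lemma normalized_normal_limit:
  assumes "infinite S"
  obtains r \<nu> where "strict_mono r" "\<And>k. r k \<in> S" "(\<lambda>k. sgn (lam (r k))) \<longlonglongrightarrow> \<nu>" "norm \<nu> = 1"
    "\<nu> \<in> dir_normal D (g xb) (g' xb u)" "adjoint (blinfun_apply (g' xb)) \<nu> = 0"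
proof -
  obtain r1 :: "nat \<Rightarrow> nat" where "strict_mono r1" "\<And>n. r1 n \<in> S"
    using infinite_enumerate[OF assms] by blast
  have "bounded (range (\<lambda>n. sgn (lam (r1 n))))"
    unfolding bounded_iff by (intro exI[of _ 1]) (simp add: norm_sgn)
  then obtain \<nu> r2 where "strict_mono r2" "((\<lambda>n. sgn (lam (r1 n))) \<circ> r2) \<longlonglongrightarrow> \<nu>"
    using bounded_imp_convergent_subsequence by blast
  define r where "r = r1 \<circ> r2"
  have r: "strict_mono r" "\<And>k. r k \<in> S"
    using \<open>strict_mono r1\<close> \<open>strict_mono r2\<close> \<open>\<And>n. r1 n \<in> S\<close> by (auto simp: r_def strict_mono_o)
  have lim: "(\<lambda>k. sgn (lam (r k))) \<longlonglongrightarrow> \<nu>"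
    using \<open>(_ \<circ> r2) \<longlonglongrightarrow> \<nu>\<close> by (simp add: r_def o_def)
  have unbounded: "filterlim (\<lambda>k. norm (lam (r k))) at_top sequentially"
    using filterlim_compose[OF lam_unbounded filterlim_subseq[OF r(1)]] by (simp add: o_def)
  have "\<forall>\<^sub>F k in sequentially. norm (sgn (lam (r k))) = 1"
    using filterlim_at_top_dense[THEN iffD1, OF unbounded, rule_format, of 0]
    by eventually_elim (simp add: norm_sgn)
  then have "(\<lambda>k. norm (sgn (lam (r k)))) \<longlonglongrightarrow> 1"
    by (rule tendsto_eventually)
  then have "norm \<nu> = 1"
    using tendsto_norm[OF lim] LIMSEQ_unique by blast
  moreover have "\<nu> \<in> dir_normal D (g xb) (g' xb u)"
  proof (rule dir_normalI_seq[OF _ _ _ reg_normal_sgn[OF lam_normal] lim])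
    show "norm (x (r k) - xb) > 0" for k using x_ne by simp
    show "(\<lambda>k. norm (x (r k) - xb)) \<longlonglongrightarrow> 0"
      using LIMSEQ_subseq_LIMSEQ[OF dist_lim r(1)] by (simp add: o_def)
    show "(\<lambda>k. (1 / norm (x (r k) - xb)) *\<^sub>R (d (r k) - g xb)) \<longlonglongrightarrow> g' xb u"
      using LIMSEQ_subseq_LIMSEQ[OF d_dir r(1)] by (simp add: o_def)
  qed
  moreover have "adjoint (blinfun_apply (g' xb)) \<nu> = 0"
  proof (rule adjoint_eq_0_of_normalized_limit[OF _ _ unbounded lim])
    show "(\<lambda>k. g' (x (r k))) \<longlonglongrightarrow> g' xb"
      using isCont_tendsto_compose[OF has_derivative_continuous[OF g2] LIMSEQ_subseq_LIMSEQ[OF x_lim r(1)]]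
      by (simp add: o_def)
    show "(\<lambda>k. adjoint (blinfun_apply (g' (x (r k)))) (lam (r k))) \<longlonglongrightarrow> xst"
      using LIMSEQ_subseq_LIMSEQ[OF coderiv_lim r(1)] by (simp add: o_def)
  qed
  ultimately show ?thesis using that r lim by blast
qed

lemma polyhedral_normal_limit:
  assumes "locally_polyhedral D (g xb)"
  obtains \<nu> where "\<nu> \<noteq> 0" "\<nu> \<in> dir_normal D (g xb) (g' xb u)"
    "adjoint (blinfun_apply (g' xb)) \<nu> = 0" "inner \<nu> (g'' xb u u) \<ge> 0"
proof -
  obtain S where "infinite S"
    and feasible: "\<And>j k. j \<in> S \<Longrightarrow> k \<in> S \<Longrightarrow> \<forall>\<^sub>F s in at_right 0. d j + s *\<^sub>R (g xb - d k) \<in> D"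
    using locally_polyhedral_feasible_directions[OF assms d_in d_lim] by blast
  obtain r \<nu> where r: "strict_mono r" "\<And>k. r k \<in> S" and lim: "(\<lambda>k. sgn (lam (r k))) \<longlonglongrightarrow> \<nu>"
    and "norm \<nu> = 1" "\<nu> \<in> dir_normal D (g xb) (g' xb u)" and adj: "adjoint (blinfun_apply (g' xb)) \<nu> = 0"
    using normalized_normal_limit[OF \<open>infinite S\<close>] by blast
  then have "\<nu> \<noteq> 0" by auto
  have "inner (sgn (lam j)) (g xb - d k) \<le> 0" if "j \<in> S" "k \<in> S" for j k
  proof (rule reg_normal_inner_tangent_le[OF reg_normal_sgn[OF lam_normal] _ _ feasible[OF that]])
    show "((\<lambda>s. d j + s *\<^sub>R (g xb - d k)) has_vector_derivative g xb - d k) (at_right 0)"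
      by (auto intro!: derivative_eq_intros)
  qed simp
  then have below: "inner \<nu> (g xb - d (r k)) \<le> 0" for k
    using r(2) by (intro tendsto_upperbound[OF tendsto_inner[OF lim tendsto_const]]) auto
  have "(\<lambda>k. sgn (lam (r k)) + (sgn (g (x (r k)) - d (r k)) - sgn (lam (r k)))) \<longlonglongrightarrow> \<nu> + 0"
    using LIMSEQ_subseq_LIMSEQ[OF aligned r(1)] by (intro tendsto_add lim) (simp add: o_def)
  then have "(\<lambda>k. inner \<nu> (sgn (g (x (r k)) - d (r k)))) \<longlonglongrightarrow> inner \<nu> \<nu>"
    by (intro tendsto_inner tendsto_const) simp
  moreover have "inner \<nu> \<nu> > 0" using \<open>\<nu> \<noteq> 0\<close> by simp
  ultimately have "\<forall>\<^sub>F k in sequentially. inner \<nu> (sgn (g (x (r k)) - d (r k))) > 0"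
    by (rule order_tendstoD)
  then have ev: "\<forall>\<^sub>F k in sequentially. inner \<nu> (g (x (r k)) - g xb) \<ge> 0"
  proof eventually_elim
    case (elim k)
    then have "inner \<nu> (g (x (r k)) - d (r k)) > 0"
      by (simp add: sgn_div_norm zero_less_mult_iff)
    with below[of k] show ?case
      by (simp add: inner_diff_right)
  qed
  have "inner \<nu> (g'' xb u u) \<ge> 0"
  proof (rule second_derivative_inner_nonneg[OF g1 g2 g''_cont adj _ _ _ ev])
    show "(\<lambda>k. x (r k)) \<longlonglongrightarrow> xb" "(\<lambda>k. (1 / norm (x (r k) - xb)) *\<^sub>R (x (r k) - xb)) \<longlonglongrightarrow> u"
      using LIMSEQ_subseq_LIMSEQ[OF x_lim r(1)] LIMSEQ_subseq_LIMSEQ[OF x_dir r(1)] by (simp_all add: o_def)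
  qed (rule x_ne)
  with \<open>\<nu> \<noteq> 0\<close> \<open>\<nu> \<in> dir_normal _ _ _\<close> adj show ?thesis
    using that by blast
qed

end

theorem mainTheorem16:
  fixes g :: "'a::euclidean_space \<Rightarrow> 'b::euclidean_space"
    and g' :: "'a \<Rightarrow> 'a \<Rightarrow>\<^sub>L 'b"
    and g'' :: "'a \<Rightarrow> 'a \<Rightarrow>\<^sub>L ('a \<Rightarrow>\<^sub>L 'b)"
    and D :: "'b set" and xb u :: 'a
  assumes g1: "\<And>x. (g has_derivative blinfun_apply (g' x)) (at x)"
    and g2: "\<And>x. (g' has_derivative blinfun_apply (g'' x)) (at x)"
    and g2c: "continuous_on UNIV g''"
    and Dcl: "closed D"
    and ingph: "(xb, 0) \<in> gph (\<lambda>x. {g x - d | d. d \<in> D})"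
    and u1: "norm u = 1"
    and cond: "(\<forall>ys \<in> dir_normal D (g xb) (blinfun_apply (g' xb) u).
                  adjoint (blinfun_apply (g' xb)) ys = 0 \<longrightarrow> ys = 0)
             \<or> (locally_polyhedral D (g xb) \<and>
                (\<forall>ys \<in> dir_normal D (g xb) (blinfun_apply (g' xb) u).
                  adjoint (blinfun_apply (g' xb)) ys = 0 \<and>
                  inner ys (blinfun_apply (blinfun_apply (g'' xb) u) u) \<ge> 0 \<longrightarrow> ys = 0))"
  shows "strongly_asymp_regular (\<lambda>x. {g x - d | d. d \<in> D}) xb 0 u"
  \<comment> \<open>no sequence as in the definition exists\<close>
  unfolding strongly_asymp_regular_def
proof (intro allI impI, goal_cases)
  case (1 x y xs lam xst yst)
  let ?\<Phi> = "\<lambda>x. {g x - d | d. d \<in> D}"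
  have nrm: "(xs k, - lam k) \<in> reg_normal (gph ?\<Phi>) (x k, y k)" for k
    using 1 by (simp add: reg_coderiv_def)
  have "xs = (\<lambda>k. adjoint (blinfun_apply (g' (x k))) (lam k))"
    using reg_normal_gph_eq_adjoint[OF g1 nrm] by blast
  moreover have "g (x k) - y k \<in> D" for k
    using reg_normal_gph_imp_reg_normal[OF nrm] by (simp add: reg_normal_def)
  moreover have "g xb \<in> D" using ingph by (auto simp: gph_def)
  ultimately interpret graph_normal_sequence g g' g'' D xb u x "\<lambda>k. g (x k) - y k" lam xst
    using 1 g1 g2 g2c reg_normal_gph_imp_reg_normal[OF nrm]
    by unfold_locales (auto simp: continuous_on_eq_continuous_at sgn_div_norm divide_inverse_commute)
  have False
  proof (cases "locally_polyhedral D (g xb)")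
    case True
    then obtain \<nu> where "\<nu> \<noteq> 0" "\<nu> \<in> dir_normal D (g xb) (g' xb u)"
      "adjoint (blinfun_apply (g' xb)) \<nu> = 0" "inner \<nu> (g'' xb u u) \<ge> 0"
      by (rule polyhedral_normal_limit)
    then show False using cond by blast
  next
    case False
    obtain \<nu> where "norm \<nu> = 1" "\<nu> \<in> dir_normal D (g xb) (g' xb u)"
      "adjoint (blinfun_apply (g' xb)) \<nu> = 0"
      using normalized_normal_limit[of UNIV] by blast
    then show False using cond False by force
  qed
  then show ?case ..
qed

end
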